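(* Let $R$ be a unital associative ring and let $J=J_2\circ J_1$ act on $M_3(R)$. Then the domain of $J^n$ does not depend on $n$ for $n\geq 2$. For $n\geq 2$, ${\rm dom}(J^n)={\rm dom}(J)\cap{\rm dom}(J^{-1})$, and $M\in M_3(R)$ belongs to ${\rm dom}(J^n)$ if and only if all square submatrices of $M$ and of $J_2(M)$ are invertible.
   Context: $R^*$ denotes the units of $R$. $M_n^*(R)$ is the set of invertible $n\times n$ matrices over $R$, and $M_n^\star(R)$ the set of $n\times n$ matrices all of whose entries are in $R^*$. $J_1(M)=M^{-1}$ with domain $M_n^*(R)$; $J_2(M)_{jk}=(M_{kj})^{-1}$ with domain $M_n^\star(R)$. Compositions $g\circ f$ have domain $\{x\in{\rm dom}(f):f(x)\in{\rm dom}(g)\}$; $J^n$ is the $n$-fold composition. $J^{-1}:=J_1\circ J_2$, with domain $\{M\in M_n^\star(R): J_2(M)\in M_n^*(R)\}$. *)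

theory Defs
  imports "HOL-Analysis.Analysis"
begin

definition is_unit_r :: "'a::ring_1 \<Rightarrow> bool" where
  "is_unit_r x \<longleftrightarrow> (\<exists>y. x * y = 1 \<and> y * x = 1)"

definition uinv :: "'a::ring_1 \<Rightarrow> 'a" where
  "uinv x = (THE y. x * y = 1 \<and> y * x = 1)"

(* Partial maps are modelled as functions into option; None = outside the domain. *)
definition pdom :: "('a \<Rightarrow> 'b option) \<Rightarrow> 'a set" where
  "pdom f = {x. f x \<noteq> None}"

definition pcomp :: "('b \<Rightarrow> 'c option) \<Rightarrow> ('a \<Rightarrow> 'b option) \<Rightarrow> 'a \<Rightarrow> 'c option" where
  "pcomp g f x = (case f x of None \<Rightarrow> None | Some y \<Rightarrow> g y)"

definition J1 :: "'a::ring_1^'n^'n \<Rightarrow> ('a^'n^'n) option" where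
  "J1 M = (if invertible M then Some (matrix_inv M) else None)"

definition J2 :: "'a::ring_1^'n^'n \<Rightarrow> ('a^'n^'n) option" where
  "J2 M = (if (\<forall>j k. is_unit_r (M $ j $ k))
           then Some (\<chi> j k. uinv (M $ k $ j)) else None)"

definition Jmap :: "'a::ring_1^'n^'n \<Rightarrow> ('a^'n^'n) option" where
  "Jmap = pcomp J2 J1"

definition Jinvmap :: "'a::ring_1^'n^'n \<Rightarrow> ('a^'n^'n) option" where
  "Jinvmap = pcomp J1 J2"

fun Jpow :: "nat \<Rightarrow> 'a::ring_1^'n^'n \<Rightarrow> ('a^'n^'n) option" where
  "Jpow 0 = Some"
| "Jpow (Suc n) = pcomp Jmap (Jpow n)"

(* This is independent of the chosen ordering of rows and columns. *)
definition submatrix_invertible :: "'a::ring_1^'n^'n \<Rightarrow> 'n set \<Rightarrow> 'n set \<Rightarrow> bool" where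
  "submatrix_invertible M I K \<longleftrightarrow>
     (\<exists>N :: 'n \<Rightarrow> 'n \<Rightarrow> 'a.
        (\<forall>i\<in>I. \<forall>i'\<in>I. (\<Sum>k\<in>K. M $ i $ k * N k i') = (if i = i' then 1 else 0)) \<and>
        (\<forall>k\<in>K. \<forall>k'\<in>K. (\<Sum>i\<in>I. N k i * M $ i $ k') = (if k = k' then 1 else 0)))"

definition all_square_submatrices_invertible :: "'a::ring_1^'n^'n \<Rightarrow> bool" where
  "all_square_submatrices_invertible M \<longleftrightarrow>
     (\<forall>I K :: 'n set. I \<noteq> {} \<and> card I = card K \<longrightarrow> submatrix_invertible M I K)"

end

theory Submission
  imports Defs
begin

text \<open>Let \<open>W = M\<inverse>\<close>, where all entries of \<open>M\<close> and \<open>W\<close> are units. Taking the Schur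
  complement of \<open>J\<^sub>2(M)\<close> at its corner entry shows that \<open>J\<^sub>2(M)\<close> is invertible iff a certain
  \<open>2 \<times> 2\<close> matrix of quasideterminants of \<open>M\<close> is; the corresponding quasideterminants of
  \<open>W\<close> are the inverses of those of \<open>M\<close> at complementary positions, and inverting the
  entries of a \<open>2 \<times> 2\<close> matrix of units (and transposing) preserves invertibility. Hence
  \<open>J\<^sub>2(M)\<close> is invertible iff \<open>J\<^sub>2(W)\<close> is. So \<open>J\<close> maps \<open>dom J \<inter> dom J\<inverse>\<close> into
  itself, and conversely \<open>M \<in> dom J\<^sup>2\<close> already forces \<open>M \<in> dom J\<inverse>\<close>; thus
  \<open>dom J\<^sup>n = dom J \<inter> dom J\<inverse>\<close> for \<open>n \<ge> 2\<close>. Finally, by Jacobi's complementary minor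
  theorem a \<open>2 \<times> 2\<close> submatrix of an invertible \<open>3 \<times> 3\<close> matrix is invertible iff the
  complementary entry of the inverse is a unit, which turns this domain into the condition
  on square submatrices.\<close>

section \<open>Units of a ring\<close>

lemma uinv_eqI:
  fixes x :: "'a::ring_1"
  assumes "x * y = 1" "y * x = 1"
  shows "uinv x = y"
  unfolding uinv_def
proof (rule the_equality)
  show "x * y = 1 \<and> y * x = 1" using assms by simp
  fix z assume "x * z = 1 \<and> z * x = 1"
  then show "z = y" using assms by (metis mult.assoc mult_1_left mult_1_right)
qed

lemma is_unit_rI:
  fixes x :: "'a::ring_1"
  assumes "x * y = 1" "y * x = 1"
  shows "is_unit_r x"
  using assms unfolding is_unit_r_def by blast

lemma is_unit_r_uinv_cancel [simp]:
  fixes x :: "'a::ring_1"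
  assumes "is_unit_r x"
  shows "x * uinv x = 1" "uinv x * x = 1" "x * (uinv x * z) = z" "uinv x * (x * z) = z"
proof -
  obtain y where "x * y = 1" "y * x = 1" using assms unfolding is_unit_r_def by blast
  then show "x * uinv x = 1" "uinv x * x = 1" using uinv_eqI by auto
  then show "x * (uinv x * z) = z" "uinv x * (x * z) = z" by (simp_all flip: mult.assoc)
qed

lemma is_unit_r_uinv [simp]:
  fixes x :: "'a::ring_1"
  assumes "is_unit_r x"
  shows "is_unit_r (uinv x)" "uinv (uinv x) = x"
  using assms is_unit_rI[of "uinv x" x] uinv_eqI[of "uinv x" x] by simp_all

lemma is_unit_r_mult:
  fixes x :: "'a::ring_1"
  assumes "is_unit_r x" "is_unit_r y"
  shows "is_unit_r (x * y)"
  using assms is_unit_rI[of "x * y" "uinv y * uinv x"] by (simp add: mult.assoc)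

lemma is_unit_r_mult_cancel:
  fixes x :: "'a::ring_1"
  assumes "is_unit_r x" "is_unit_r y"
  shows "is_unit_r (x * s * y) \<longleftrightarrow> is_unit_r s"
proof
  assume "is_unit_r (x * s * y)"
  then have "is_unit_r (uinv x * (x * s * y) * uinv y)"
    using assms is_unit_r_mult is_unit_r_uinv by metis
  then show "is_unit_r s" using assms by (simp add: mult.assoc)
next
  assume "is_unit_r s"
  then show "is_unit_r (x * s * y)" using assms is_unit_r_mult by metis
qed

lemma is_unit_r_minus:
  fixes x :: "'a::ring_1"
  assumes "is_unit_r x"
  shows "is_unit_r (- x)"
  using assms is_unit_rI[of "- x" "- uinv x"] by simp

section \<open>Invertible \<open>2 \<times> 2\<close> matrices\<close>

definition invertible2 :: "'a::ring_1 \<Rightarrow> 'a \<Rightarrow> 'a \<Rightarrow> 'a \<Rightarrow> bool" where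
  "invertible2 a b c d \<longleftrightarrow> (\<exists>e f g h.
      a*e + b*g = 1 \<and> a*f + b*h = 0 \<and> c*e + d*g = 0 \<and> c*f + d*h = 1 \<and>
      e*a + f*c = 1 \<and> e*b + f*d = 0 \<and> g*a + h*c = 0 \<and> g*b + h*d = 1)"

lemma invertible2_swapI:
  assumes "invertible2 a b c d" shows "invertible2 d c b a"
  using assms unfolding invertible2_def by (metis add.commute)

lemma invertible2_swap: "invertible2 d c b a \<longleftrightarrow> invertible2 a b c d"
  using invertible2_swapI by blast

lemma invertible2_minusI:
  assumes "invertible2 a b c d" shows "invertible2 (-a) (-b) (-c) (-d)"
proof -
  obtain e f g h where H: "a*e + b*g = 1" "a*f + b*h = 0" "c*e + d*g = 0" "c*f + d*h = 1"
      "e*a + f*c = 1" "e*b + f*d = 0" "g*a + h*c = 0" "g*b + h*d = 1"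
    using assms unfolding invertible2_def by blast
  show ?thesis unfolding invertible2_def
    by (rule exI[of _ "-e"], rule exI[of _ "-f"], rule exI[of _ "-g"], rule exI[of _ "-h"])
      (simp add: H)
qed

lemma invertible2_minus: "invertible2 (-a) (-b) (-c) (-d) \<longleftrightarrow> invertible2 a b c d"
  using invertible2_minusI[of a b c d] invertible2_minusI[of "-a" "-b" "-c" "-d"] by auto

lemma invertible2_scale:
  assumes "invertible2 a b c d" "is_unit_r p1" "is_unit_r p2" "is_unit_r q1" "is_unit_r q2"
  shows "invertible2 (p1*a*q1) (p1*b*q2) (p2*c*q1) (p2*d*q2)"
proof -
  obtain e f g h where H: "a*e + b*g = 1" "a*f + b*h = 0" "c*e + d*g = 0" "c*f + d*h = 1"
      "e*a + f*c = 1" "e*b + f*d = 0" "g*a + h*c = 0" "g*b + h*d = 1"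
    using assms unfolding invertible2_def by blast
  let ?e = "uinv q1 * e * uinv p1" and ?f = "uinv q1 * f * uinv p2"
  let ?g = "uinv q2 * g * uinv p1" and ?h = "uinv q2 * h * uinv p2"
  have E: "p1*a*q1*?e + p1*b*q2*?g = p1*(a*e + b*g)*uinv p1"
    "p1*a*q1*?f + p1*b*q2*?h = p1*(a*f + b*h)*uinv p2"
    "p2*c*q1*?e + p2*d*q2*?g = p2*(c*e + d*g)*uinv p1"
    "p2*c*q1*?f + p2*d*q2*?h = p2*(c*f + d*h)*uinv p2"
    "?e*(p1*a*q1) + ?f*(p2*c*q1) = uinv q1 * (e*a + f*c) * q1"
    "?e*(p1*b*q2) + ?f*(p2*d*q2) = uinv q1 * (e*b + f*d) * q2"
    "?g*(p1*a*q1) + ?h*(p2*c*q1) = uinv q2 * (g*a + h*c) * q1"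
    "?g*(p1*b*q2) + ?h*(p2*d*q2) = uinv q2 * (g*b + h*d) * q2"
    using assms by (simp_all add: algebra_simps)
  show ?thesis unfolding invertible2_def
    by (rule exI[of _ ?e], rule exI[of _ ?f], rule exI[of _ ?g], rule exI[of _ ?h])
      (use assms in \<open>simp only: E H, simp\<close>)
qed

lemma invertible2_scale_iff:
  assumes "is_unit_r p1" "is_unit_r p2" "is_unit_r q1" "is_unit_r q2"
  shows "invertible2 (p1*a*q1) (p1*b*q2) (p2*c*q1) (p2*d*q2) \<longleftrightarrow> invertible2 a b c d"
proof
  assume "invertible2 (p1*a*q1) (p1*b*q2) (p2*c*q1) (p2*d*q2)"
  from invertible2_scale[OF this, of "uinv p1" "uinv p2" "uinv q1" "uinv q2"] assms
  show "invertible2 a b c d" by (simp add: mult.assoc)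
qed (rule invertible2_scale[OF _ assms])

lemma invertible2_iff_schur:
  fixes a :: "'a::ring_1"
  assumes d: "is_unit_r d"
  shows "invertible2 a b c d \<longleftrightarrow> is_unit_r (a - b * uinv d * c)"
proof
  assume "invertible2 a b c d"
  then obtain e f g h where H: "a*e + b*g = 1" "c*e + d*g = 0" "e*a + f*c = 1" "e*b + f*d = 0"
    unfolding invertible2_def by blast
  have "g = - (uinv d * c * e)"
    using arg_cong[OF H(2), of "(*) (uinv d)"] d by (simp add: algebra_simps eq_neg_iff_add_eq_0)
  then have "(a - b * uinv d * c) * e = 1" using H(1) by (simp add: algebra_simps)
  moreover have "f = - (e * b * uinv d)"
    using arg_cong[OF H(4), of "\<lambda>x. x * uinv d"] d
    by (simp add: algebra_simps eq_neg_iff_add_eq_0 mult.assoc)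
  then have "e * (a - b * uinv d * c) = 1" using H(3) by (simp add: algebra_simps)
  ultimately show "is_unit_r (a - b * uinv d * c)" by (rule is_unit_rI)
next
  assume s: "is_unit_r (a - b * uinv d * c)"
  define s' where "s' = uinv (a - b * uinv d * c)"
  have "(a - b * uinv d * c) * s' = 1" "s' * (a - b * uinv d * c) = 1"
    using s unfolding s'_def by simp_all
  then have s1a: "a * s' = 1 + b * uinv d * c * s'" and s1b: "s' * a = 1 + s' * b * uinv d * c"
    by (simp_all add: algebra_simps)
  let ?f = "- (s' * b * uinv d)" and ?g = "- (uinv d * c * s')"
  let ?h = "uinv d + uinv d * c * s' * b * uinv d"
  have "a*?f + b*?h = - ((a * s') * b * uinv d) + b * uinv d + b * uinv d * c * s' * b * uinv d"
    "?g*a + ?h*c = - (uinv d * c * (s' * a)) + uinv d * c + uinv d * c * s' * b * uinv d * c"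
    using d by (simp_all add: algebra_simps)
  then have "a*?f + b*?h = 0" "?g*a + ?h*c = 0"
    unfolding s1a s1b by (simp_all add: algebra_simps)
  moreover have "a * s' + b * ?g = 1" "s' * a + ?f * c = 1" using s1a s1b by (simp_all add: algebra_simps)
  moreover have "c * s' + d * ?g = 0" "c * ?f + d * ?h = 1" "s' * b + ?f * d = 0" "?g*b + ?h*d = 1"
    using d by (simp_all add: algebra_simps)
  ultimately show "invertible2 a b c d" unfolding invertible2_def by blast
qed

lemma invertible2_uinv_transpose_iff:
  fixes a :: "'a::ring_1"
  assumes u: "is_unit_r a" "is_unit_r b" "is_unit_r c" "is_unit_r d"
  shows "invertible2 (uinv a) (uinv c) (uinv b) (uinv d) \<longleftrightarrow> invertible2 a b c d"
proof -
  have "uinv a - uinv c * uinv (uinv d) * uinv b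
      = (uinv c * (- (d * uinv b))) * (a - b * uinv d * c) * uinv a"
    using u by (simp add: algebra_simps)
  moreover have "is_unit_r (uinv c * (- (d * uinv b)))"
    using u by (intro is_unit_r_mult is_unit_r_minus) simp_all
  ultimately show ?thesis
    using u invertible2_iff_schur[of "uinv d" "uinv a" "uinv c" "uinv b"] invertible2_iff_schur[of d a b c]
      is_unit_r_mult_cancel[of "uinv c * (- (d * uinv b))" "uinv a"] by simp
qed

section \<open>Matrices over a ring\<close>

lemma matrix_mult_nth: "(A ** B) $ i $ j = (\<Sum>k\<in>UNIV. A $ i $ k * B $ k $ j)"
  by (simp add: matrix_matrix_mult_def)

lemma mat_1_nth: "(mat 1 :: 'a::zero_neq_one^'n^'n) $ i $ j = (if i = j then 1 else 0)"
  by (simp add: mat_def)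

lemma matrix_inv_right_left:
  fixes M :: "'a::ring_1^'n^'n"
  assumes "invertible M"
  shows "M ** matrix_inv M = mat 1" "matrix_inv M ** M = mat 1"
proof -
  have "\<exists>A'. M ** A' = mat 1 \<and> A' ** M = mat 1" using assms unfolding invertible_def by blast
  then have "M ** matrix_inv M = mat 1 \<and> matrix_inv M ** M = mat 1"
    unfolding matrix_inv_def by (rule someI_ex)
  then show "M ** matrix_inv M = mat 1" "matrix_inv M ** M = mat 1" by auto
qed

lemma matrix_inv_eqI:
  fixes M :: "'a::ring_1^'n^'n"
  assumes "M ** W = mat 1" "W ** M = mat 1"
  shows "matrix_inv M = W"
proof -
  have "invertible M" using assms unfolding invertible_def by blast
  have "matrix_inv M = matrix_inv M ** (M ** W)" using assms by simp
  also have "\<dots> = W" using matrix_inv_right_left[OF \<open>invertible M\<close>] by (simp add: matrix_mul_assoc)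
  finally show ?thesis .
qed

lemma invertible_matrix_inv:
  fixes M :: "'a::ring_1^'n^'n"
  assumes "invertible M"
  shows "invertible (matrix_inv M)" "matrix_inv (matrix_inv M) = M"
  using matrix_inv_right_left[OF assms] matrix_inv_eqI[of "matrix_inv M" M]
  unfolding invertible_def by auto

lemma submatrix_invertible_UNIV_iff:
  fixes M :: "'a::ring_1^'n^'n"
  shows "submatrix_invertible M UNIV UNIV \<longleftrightarrow> invertible M"
proof
  assume "submatrix_invertible M UNIV UNIV"
  then obtain N where "\<forall>i i'. (\<Sum>k\<in>UNIV. M $ i $ k * N k i') = (if i = i' then 1 else 0)"
      "\<forall>k k'. (\<Sum>i\<in>UNIV. N k i * M $ i $ k') = (if k = k' then 1 else 0)"
    unfolding submatrix_invertible_def by auto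
  then have "M ** (\<chi> i j. N i j) = mat 1" "(\<chi> i j. N i j) ** M = mat 1"
    by (simp_all add: vec_eq_iff matrix_mult_nth mat_1_nth)
  then show "invertible M" unfolding invertible_def by blast
next
  assume "invertible M"
  then obtain W where "M ** W = mat 1" "W ** M = mat 1" unfolding invertible_def by blast
  then have "(\<Sum>k\<in>UNIV. M $ i $ k * W $ k $ i') = (if i = i' then 1 else 0)"
    "(\<Sum>i\<in>UNIV. W $ k $ i * M $ i $ k') = (if k = k' then 1 else 0)" for i i' k k'
    by (simp_all flip: matrix_mult_nth add: mat_1_nth)
  then show "submatrix_invertible M UNIV UNIV"
    unfolding submatrix_invertible_def by (intro exI[of _ "\<lambda>i j. W $ i $ j"]) simp
qed

lemma submatrix_invertible_singleton_iff:
  fixes M :: "'a::ring_1^'n^'n"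
  shows "submatrix_invertible M {i} {k} \<longleftrightarrow> is_unit_r (M $ i $ k)"
proof
  assume "submatrix_invertible M {i} {k}"
  then obtain N where "M $ i $ k * N k i = 1" "N k i * M $ i $ k = 1"
    unfolding submatrix_invertible_def by auto
  then show "is_unit_r (M $ i $ k)" by (rule is_unit_rI)
next
  assume "is_unit_r (M $ i $ k)"
  then show "submatrix_invertible M {i} {k}"
    unfolding submatrix_invertible_def by (intro exI[of _ "\<lambda>_ _. uinv (M $ i $ k)"]) simp
qed

lemma submatrix_invertible_pair_iff:
  fixes M :: "'a::ring_1^'n^'n"
  assumes "x \<noteq> y" "u \<noteq> v"
  shows "submatrix_invertible M {x, y} {u, v} \<longleftrightarrow>
    invertible2 (M $ x $ u) (M $ x $ v) (M $ y $ u) (M $ y $ v)"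
proof
  assume "submatrix_invertible M {x, y} {u, v}"
  then obtain N where N:
    "\<forall>i\<in>{x, y}. \<forall>i'\<in>{x, y}. (\<Sum>k\<in>{u, v}. M $ i $ k * N k i') = (if i = i' then 1 else 0)"
    "\<forall>k\<in>{u, v}. \<forall>k'\<in>{u, v}. (\<Sum>i\<in>{x, y}. N k i * M $ i $ k') = (if k = k' then 1 else 0)"
    unfolding submatrix_invertible_def by blast
  show "invertible2 (M $ x $ u) (M $ x $ v) (M $ y $ u) (M $ y $ v)"
    unfolding invertible2_def
    by (rule exI[of _ "N u x"], rule exI[of _ "N u y"], rule exI[of _ "N v x"], rule exI[of _ "N v y"])
      (use N assms in \<open>auto simp: add.commute\<close>)
next
  assume "invertible2 (M $ x $ u) (M $ x $ v) (M $ y $ u) (M $ y $ v)"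
  then obtain e f g h where
    "M$x$u * e + M$x$v * g = 1" "M$x$u * f + M$x$v * h = 0"
    "M$y$u * e + M$y$v * g = 0" "M$y$u * f + M$y$v * h = 1"
    "e * M$x$u + f * M$y$u = 1" "e * M$x$v + f * M$y$v = 0"
    "g * M$x$u + h * M$y$u = 0" "g * M$x$v + h * M$y$v = 1"
    unfolding invertible2_def by blast
  then show "submatrix_invertible M {x, y} {u, v}"
    unfolding submatrix_invertible_def using assms
    by (intro exI[of _ "\<lambda>k i. if k = u then (if i = x then e else f) else (if i = x then g else h)"])
      auto
qed

lemma sum_UNIV_split_Compl:
  fixes f :: "'n::finite \<Rightarrow> 'a::comm_monoid_add"
  shows "sum f UNIV = sum f K + sum f (- K)"
  using sum.union_disjoint[of K "- K" f] by (simp add: sup_compl_top)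

text \<open>If \<open>W = M\<inverse>\<close> and \<open>X\<close> inverts the block \<open>W[-K,-I]\<close>, then
  \<open>W[K,I] - W[K,-I] X W[-K,I]\<close> inverts \<open>M[I,K]\<close>: Jacobi's complementary minor theorem
  in block form, which needs no commutativity.\<close>

definition complementary_inverse ::
  "'a::ring_1^'n^'n \<Rightarrow> ('n \<Rightarrow> 'n \<Rightarrow> 'a) \<Rightarrow> 'n set \<Rightarrow> 'n set \<Rightarrow> 'n \<Rightarrow> 'n \<Rightarrow> 'a" where
  "complementary_inverse W X I K k i = W$k$i - (\<Sum>j\<in>-I. \<Sum>k'\<in>-K. W$k$j * X j k' * W$k'$i)"

lemma complementary_inverse_right:
  fixes M W :: "'a::ring_1^'n::finite^'n"
  assumes MW: "M ** W = mat 1"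
    and X: "\<And>k k'. k \<in> -K \<Longrightarrow> k' \<in> -K \<Longrightarrow> (\<Sum>j\<in>-I. W$k$j * X j k') = (if k = k' then 1 else 0)"
    and "i \<in> I"
  shows "(\<Sum>k\<in>K. M$i$k * complementary_inverse W X I K k i') = (if i = i' then 1 else 0)"
proof -
  have mw: "(\<Sum>k\<in>K. M$i$k * W$k$j) + (\<Sum>k\<in>-K. M$i$k * W$k$j) = (if i = j then 1 else 0)" for j
    using MW sum_UNIV_split_Compl[of "\<lambda>k. M$i$k * W$k$j" K]
    by (simp flip: matrix_mult_nth add: mat_1_nth)
  have off_I: "(\<Sum>k\<in>K. M$i$k * W$k$j) = - (\<Sum>k\<in>-K. M$i$k * W$k$j)" if "j \<notin> I" for j
    using mw[of j] \<open>i \<in> I\<close> that by (auto simp: eq_neg_iff_add_eq_0)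
  have "(\<Sum>k\<in>K. M$i$k * (\<Sum>j\<in>-I. \<Sum>k'\<in>-K. W$k$j * X j k' * W$k'$i'))
      = (\<Sum>j\<in>-I. \<Sum>k'\<in>-K. (\<Sum>k\<in>K. M$i$k * W$k$j) * X j k' * W$k'$i')"
    by (simp add: sum_distrib_left sum_distrib_right mult.assoc sum.swap[of _ K])
  also have "\<dots> = (\<Sum>j\<in>-I. \<Sum>k'\<in>-K. - ((\<Sum>k\<in>-K. M$i$k * W$k$j) * X j k' * W$k'$i'))"
    using off_I by simp
  also have "\<dots> = - (\<Sum>k\<in>-K. \<Sum>k'\<in>-K. M$i$k * (\<Sum>j\<in>-I. W$k$j * X j k') * W$k'$i')"
    by (simp add: sum_negf sum_distrib_left sum_distrib_right mult.assoc)
      (subst sum.swap, simp add: sum.swap[of _ "-I"])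
  also have "\<dots> = - (\<Sum>k\<in>-K. \<Sum>k'\<in>-K. M$i$k * (if k = k' then 1 else 0) * W$k'$i')"
    using X by (intro arg_cong[where f=uminus] sum.cong refl) simp
  also have "\<dots> = - (\<Sum>k\<in>-K. M$i$k * W$k$i')"
    by (simp add: if_distrib if_distribR cong: if_cong)
  finally show ?thesis
    using mw[of i'] by (simp add: complementary_inverse_def right_diff_distrib sum_subtractf)
qed

lemma complementary_inverse_left:
  fixes M W :: "'a::ring_1^'n::finite^'n"
  assumes WM: "W ** M = mat 1"
    and X: "\<And>j j'. j \<in> -I \<Longrightarrow> j' \<in> -I \<Longrightarrow> (\<Sum>k\<in>-K. X j k * W$k$j') = (if j = j' then 1 else 0)"
    and "k' \<in> K"
  shows "(\<Sum>i\<in>I. complementary_inverse W X I K k i * M$i$k') = (if k = k' then 1 else 0)"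
proof -
  have wm: "(\<Sum>i\<in>I. W$k''$i * M$i$k') + (\<Sum>i\<in>-I. W$k''$i * M$i$k') = (if k'' = k' then 1 else 0)"
    for k''
    using WM sum_UNIV_split_Compl[of "\<lambda>i. W$k''$i * M$i$k'" I]
    by (simp flip: matrix_mult_nth add: mat_1_nth)
  have off_K: "(\<Sum>i\<in>I. W$k''$i * M$i$k') = - (\<Sum>i\<in>-I. W$k''$i * M$i$k')" if "k'' \<notin> K" for k''
    using wm[of k''] \<open>k' \<in> K\<close> that by (auto simp: eq_neg_iff_add_eq_0)
  have "(\<Sum>i\<in>I. (\<Sum>j\<in>-I. \<Sum>k''\<in>-K. W$k$j * X j k'' * W$k''$i) * M$i$k')
      = (\<Sum>j\<in>-I. \<Sum>k''\<in>-K. W$k$j * X j k'' * (\<Sum>i\<in>I. W$k''$i * M$i$k'))"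
    by (simp add: sum_distrib_left sum_distrib_right mult.assoc)
      (subst sum.swap, simp add: sum.swap[of _ I])
  also have "\<dots> = (\<Sum>j\<in>-I. \<Sum>k''\<in>-K. - (W$k$j * X j k'' * (\<Sum>i\<in>-I. W$k''$i * M$i$k')))"
    using off_K by simp
  also have "\<dots> = - (\<Sum>j\<in>-I. \<Sum>i\<in>-I. W$k$j * (\<Sum>k''\<in>-K. X j k'' * W$k''$i) * M$i$k')"
    by (simp add: sum_negf sum_distrib_left sum_distrib_right mult.assoc)
      (subst (2) sum.swap, simp add: sum.swap[of _ "-K"])
  also have "\<dots> = - (\<Sum>j\<in>-I. \<Sum>i\<in>-I. W$k$j * (if j = i then 1 else 0) * M$i$k')"
    using X by (intro arg_cong[where f=uminus] sum.cong refl) simp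
  also have "\<dots> = - (\<Sum>j\<in>-I. W$k$j * M$j$k')"
    by (simp add: if_distrib if_distribR cong: if_cong)
  finally show ?thesis
    using wm[of k] by (simp add: complementary_inverse_def left_diff_distrib sum_subtractf)
qed

lemma submatrix_invertible_complement:
  fixes M W :: "'a::ring_1^'n::finite^'n"
  assumes "M ** W = mat 1" "W ** M = mat 1" "submatrix_invertible W (- K) (- I)"
  shows "submatrix_invertible M I K"
proof -
  obtain X where
    "\<And>k k'. k \<in> -K \<Longrightarrow> k' \<in> -K \<Longrightarrow> (\<Sum>j\<in>-I. W$k$j * X j k') = (if k = k' then 1 else 0)"
    "\<And>j j'. j \<in> -I \<Longrightarrow> j' \<in> -I \<Longrightarrow> (\<Sum>k\<in>-K. X j k * W$k$j') = (if j = j' then 1 else 0)"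
    using assms(3) unfolding submatrix_invertible_def by blast
  then show ?thesis unfolding submatrix_invertible_def
    using complementary_inverse_right[OF assms(1)] complementary_inverse_left[OF assms(2)]
    by (intro exI[of _ "complementary_inverse W X I K"]) blast
qed

lemma submatrix_invertible_Compl_singleton_iff:
  fixes M :: "'a::ring_1^'n::finite^'n"
  assumes "invertible M"
  shows "submatrix_invertible M (- {z}) (- {t}) \<longleftrightarrow> is_unit_r (matrix_inv M $ t $ z)"
  using submatrix_invertible_complement[of "matrix_inv M" M "{z}" "{t}"]
    submatrix_invertible_complement[of M "matrix_inv M" "- {t}" "- {z}"]
    matrix_inv_right_left[OF assms] submatrix_invertible_singleton_iff
  by auto

lemma invertible_mult_cancel:
  fixes A X B :: "'a::ring_1^'n^'n"
  assumes "invertible A" "invertible B"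
  shows "invertible (A ** X ** B) \<longleftrightarrow> invertible X"
proof
  assume "invertible (A ** X ** B)"
  with assms(1) have "invertible (matrix_inv A ** (A ** X ** B))"
    by (rule invertible_mult[OF invertible_matrix_inv(1)])
  then have "invertible (matrix_inv A ** (A ** X ** B) ** matrix_inv B)"
    using invertible_matrix_inv(1)[OF assms(2)] by (rule invertible_mult)
  moreover have "matrix_inv A ** (A ** X ** B) ** matrix_inv B
      = (matrix_inv A ** A) ** X ** (B ** matrix_inv B)"
    by (simp only: matrix_mul_assoc)
  ultimately show "invertible X"
    using matrix_inv_right_left[OF assms(1)] matrix_inv_right_left[OF assms(2)] by simp
qed (use assms invertible_mult in blast)

definition unit_entries :: "'a::ring_1^'n^'n \<Rightarrow> bool" where
  "unit_entries M \<longleftrightarrow> (\<forall>j k. is_unit_r (M $ j $ k))"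

section \<open>Matrices of size 3\<close>

lemma card_Compl_singleton_3: "card (- {z :: 3}) = 2"
  by (simp add: Compl_eq_Diff_UNIV card_Diff_subset)

lemma subset_3_by_card:
  fixes S :: "3 set"
  shows "card S \<le> 3"
    and "card S = 1 \<Longrightarrow> \<exists>i. S = {i}"
    and "card S = 2 \<Longrightarrow> \<exists>z. S = - {z}"
    and "card S = 3 \<Longrightarrow> S = UNIV"
proof -
  show "card S \<le> 3" using card_mono[of UNIV S] by simp
  show "card S = 1 \<Longrightarrow> \<exists>i. S = {i}" using card_1_singletonE by metis
  show "\<exists>z. S = - {z}" if "card S = 2"
  proof -
    have "card (- S) = 1" using that by (simp add: Compl_eq_Diff_UNIV card_Diff_subset)
    then obtain z where "- S = {z}" by (rule card_1_singletonE)
    then show ?thesis by (metis double_complement)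
  qed
  show "card S = 3 \<Longrightarrow> S = UNIV" by (intro card_eq_UNIV_imp_eq_UNIV) simp_all
qed

lemma all_square_submatrices_invertible_3_iff:
  fixes M :: "'a::ring_1^3^3"
  shows "all_square_submatrices_invertible M \<longleftrightarrow>
    unit_entries M \<and> invertible M \<and> unit_entries (matrix_inv M)"
proof
  assume A: "all_square_submatrices_invertible M"
  note sub = A[unfolded all_square_submatrices_invertible_def, rule_format]
  have "submatrix_invertible M (- {z}) (- {t})" for z t :: 3
    using sub[of "- {z}" "- {t}"] card_Compl_singleton_3[of z] card_Compl_singleton_3[of t]
    by (metis card.empty zero_neq_numeral)
  moreover have "submatrix_invertible M {j} {k}" "submatrix_invertible M UNIV UNIV" for j k
    using sub by simp_all
  ultimately show "unit_entries M \<and> invertible M \<and> unit_entries (matrix_inv M)"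
    unfolding unit_entries_def
    by (simp add: submatrix_invertible_UNIV_iff submatrix_invertible_singleton_iff
        submatrix_invertible_Compl_singleton_iff)
next
  assume B: "unit_entries M \<and> invertible M \<and> unit_entries (matrix_inv M)"
  show "all_square_submatrices_invertible M" unfolding all_square_submatrices_invertible_def
  proof (intro allI impI, elim conjE)
    fix I K :: "3 set"
    assume "I \<noteq> {}" and card: "card I = card K"
    have "card I \<noteq> 0" using \<open>I \<noteq> {}\<close> by simp
    then consider "card I = 1" | "card I = 2" | "card I = 3"
      using subset_3_by_card(1)[of I] by linarith
    then consider i k where "I = {i}" "K = {k}" | z t where "I = - {z}" "K = - {t}"
      | "I = UNIV" "K = UNIV"
      using subset_3_by_card(2-4) card by metis
    then show "submatrix_invertible M I K"
      using B unfolding unit_entries_def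
      by cases (simp_all add: submatrix_invertible_UNIV_iff submatrix_invertible_singleton_iff
          submatrix_invertible_Compl_singleton_iff)
  qed
qed

lemma matrix_eq_3_iff:
  fixes A B :: "'a^3^3"
  shows "A = B \<longleftrightarrow> (A$1$1 = B$1$1 \<and> A$1$2 = B$1$2 \<and> A$1$3 = B$1$3 \<and>
                    A$2$1 = B$2$1 \<and> A$2$2 = B$2$2 \<and> A$2$3 = B$2$3 \<and>
                    A$3$1 = B$3$1 \<and> A$3$2 = B$3$2 \<and> A$3$3 = B$3$3)"
  by (auto simp: vec_eq_iff forall_3)

lemma matrix_mult_nth_3:
  "((A::'a::ring_1^3^3) ** B) $ i $ j = A$i$1 * B$1$j + A$i$2 * B$2$j + A$i$3 * B$3$j"
  by (simp add: matrix_mult_nth sum_3)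

lemma invertible_block_diagonal_3:
  fixes a :: "'a::ring_1"
  assumes "is_unit_r a"
  shows "invertible (vector [vector [a, 0, 0], vector [0, b, c], vector [0, d, e]] :: 'a^3^3)
    \<longleftrightarrow> invertible2 b c d e"
    (is "invertible ?D \<longleftrightarrow> _")
proof
  assume "invertible ?D"
  then obtain Y where "?D ** Y = mat 1" "Y ** ?D = mat 1" unfolding invertible_def by blast
  then have Y: "(?D ** Y) $ i $ j = (if i = j then 1 else 0)" "(Y ** ?D) $ i $ j = (if i = j then 1 else 0)"
    for i j by (simp_all add: mat_1_nth)
  show "invertible2 b c d e" unfolding invertible2_def
    by (rule exI[of _ "Y$2$2"], rule exI[of _ "Y$2$3"], rule exI[of _ "Y$3$2"], rule exI[of _ "Y$3$3"])
      (use Y(1)[of 2 2] Y(1)[of 2 3] Y(1)[of 3 2] Y(1)[of 3 3]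
        Y(2)[of 2 2] Y(2)[of 2 3] Y(2)[of 3 2] Y(2)[of 3 3] in \<open>simp add: matrix_mult_nth_3\<close>)
next
  assume "invertible2 b c d e"
  then obtain e' f' g' h' where "b*e' + c*g' = 1" "b*f' + c*h' = 0" "d*e' + e*g' = 0" "d*f' + e*h' = 1"
      "e'*b + f'*d = 1" "e'*c + f'*e = 0" "g'*b + h'*d = 0" "g'*c + h'*e = 1"
    unfolding invertible2_def by blast
  then have "?D ** vector [vector [uinv a, 0, 0], vector [0, e', f'], vector [0, g', h']] = mat 1"
    "vector [vector [uinv a, 0, 0], vector [0, e', f'], vector [0, g', h']] ** ?D = mat 1"
    using assms by (simp_all add: matrix_eq_3_iff matrix_mult_nth_3 mat_1_nth)
  then show "invertible ?D" unfolding invertible_def by blast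
qed

text \<open>The quasideterminant of the \<open>2 \<times> 2\<close> submatrix of \<open>A\<close> on rows \<open>i, k\<close> and
  columns \<open>j, l\<close>, expanded at the entry \<open>(i, j)\<close>.\<close>

definition qdet :: "'a::ring_1^'n^'n \<Rightarrow> 'n \<Rightarrow> 'n \<Rightarrow> 'n \<Rightarrow> 'n \<Rightarrow> 'a" where
  "qdet A i j k l = A$i$j - A$i$l * uinv (A$k$l) * A$k$j"

lemma invertible_3_iff_schur:
  fixes X :: "'a::ring_1^3^3"
  assumes u: "is_unit_r (X$1$1)"
  shows "invertible X \<longleftrightarrow>
    invertible2 (qdet X 2 2 1 1) (qdet X 2 3 1 1) (qdet X 3 2 1 1) (qdet X 3 3 1 1)"
proof -
  let ?p = "uinv (X$1$1)"
  define L :: "'a^3^3" where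
    "L = vector [vector [1, 0, 0], vector [X$2$1 * ?p, 1, 0], vector [X$3$1 * ?p, 0, 1]]"
  define U :: "'a^3^3" where
    "U = vector [vector [1, ?p * X$1$2, ?p * X$1$3], vector [0, 1, 0], vector [0, 0, 1]]"
  have "L ** vector [vector [1, 0, 0], vector [- (X$2$1 * ?p), 1, 0], vector [- (X$3$1 * ?p), 0, 1]]
      = mat 1"
    "vector [vector [1, 0, 0], vector [- (X$2$1 * ?p), 1, 0], vector [- (X$3$1 * ?p), 0, 1]] ** L
      = mat 1"
    by (simp_all add: L_def matrix_eq_3_iff matrix_mult_nth_3 mat_1_nth)
  then have "invertible L" unfolding invertible_def by blast
  have "U ** vector [vector [1, - (?p * X$1$2), - (?p * X$1$3)], vector [0, 1, 0], vector [0, 0, 1]]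
      = mat 1"
    "vector [vector [1, - (?p * X$1$2), - (?p * X$1$3)], vector [0, 1, 0], vector [0, 0, 1]] ** U
      = mat 1"
    by (simp_all add: U_def matrix_eq_3_iff matrix_mult_nth_3 mat_1_nth)
  then have "invertible U" unfolding invertible_def by blast
  define D :: "'a^3^3" where
    "D = vector [vector [X$1$1, 0, 0], vector [0, qdet X 2 2 1 1, qdet X 2 3 1 1],
      vector [0, qdet X 3 2 1 1, qdet X 3 3 1 1]]"
  have "X = L ** D ** U"
    using u by (simp add: L_def U_def D_def qdet_def matrix_eq_3_iff matrix_mult_nth_3 algebra_simps)
  then have "invertible X \<longleftrightarrow> invertible D"
    using invertible_mult_cancel[OF \<open>invertible L\<close> \<open>invertible U\<close>] by metis
  then show ?thesis unfolding D_def using invertible_block_diagonal_3[OF u] by simp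
qed

lemma UNIV_3_distinct:
  fixes x y z :: 3
  assumes "x \<noteq> y" "x \<noteq> z" "y \<noteq> z"
  shows "UNIV = {x, y, z}"
  using assms by (intro card_eq_UNIV_imp_eq_UNIV[symmetric]) simp_all

lemma qdet_mult_right_eq_1:
  fixes A B C D E F p q r s t u :: "'a::ring_1"
  assumes uF: "is_unit_r F" and ut: "is_unit_r t"
    and e1: "A*p + B*q + C*r = 1" and e2: "D*p + E*q + F*r = 0"
    and e3: "A * s + B * t + C * u = 0" and e4: "D * s + E * t + F * u = 0"
  shows "(A - C * uinv F * D) * (p - s * uinv t * q) = 1"
proof -
  have r: "r = - (uinv F * (D*p + E*q))"
    using arg_cong[OF e2, of "(*) (uinv F)"] uF by (simp add: algebra_simps eq_neg_iff_add_eq_0)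
  have u: "u = - (uinv F * (D * s + E * t))"
    using arg_cong[OF e4, of "(*) (uinv F)"] uF by (simp add: algebra_simps eq_neg_iff_add_eq_0)
  have f1: "(A - C * uinv F * D) * p + (B - C * uinv F * E) * q = 1"
    using e1 unfolding r by (simp add: algebra_simps)
  have "(A - C * uinv F * D) * s + (B - C * uinv F * E) * t = 0"
    using e3 unfolding u by (simp add: algebra_simps)
  then have "((A - C * uinv F * D) * s + (B - C * uinv F * E) * t) * uinv t = 0"
    by simp
  then have rho: "B - C * uinv F * E = - ((A - C * uinv F * D) * s * uinv t)"
    using ut by (simp add: algebra_simps eq_neg_iff_add_eq_0 mult.assoc)
  show ?thesis using f1 unfolding rho by (simp add: algebra_simps)
qed

lemma qdet_mult_left_eq_1:
  fixes A C D F G H p q s t x y :: "'a::ring_1"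
  assumes uF: "is_unit_r F" and ut: "is_unit_r t"
    and e1: "p * A + s * G + x*D = 1" and e2: "q*A + t*G + y*D = 0"
    and e3: "p * C + s * H + x*F = 0" and e4: "q*C + t*H + y*F = 0"
  shows "(p - s * uinv t * q) * (A - C * uinv F * D) = 1"
proof -
  have G: "G = - (uinv t * (q*A + y*D))"
    using arg_cong[OF e2, of "(*) (uinv t)"] ut by (simp add: algebra_simps eq_neg_iff_add_eq_0)
  have H: "H = - (uinv t * (q*C + y*F))"
    using arg_cong[OF e4, of "(*) (uinv t)"] ut by (simp add: algebra_simps eq_neg_iff_add_eq_0)
  have f1: "(p - s * uinv t * q) * A + (x - s * uinv t * y) * D = 1"
    using e1 unfolding G by (simp add: algebra_simps)
  have "(p - s * uinv t * q) * C + (x - s * uinv t * y) * F = 0"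
    using e3 unfolding H by (simp add: algebra_simps)
  then have "((p - s * uinv t * q) * C + (x - s * uinv t * y) * F) * uinv F = 0"
    by simp
  then have psi: "x - s * uinv t * y = - ((p - s * uinv t * q) * C * uinv F)"
    using uF by (simp add: algebra_simps eq_neg_iff_add_eq_0 mult.assoc)
  show ?thesis using f1 unfolding psi by (simp add: algebra_simps)
qed

text \<open>Both quasideterminants are expanded at the entry in row \<open>r1\<close> and column \<open>c1\<close> of
  \<open>W\<close> (transposed for \<open>M\<close>); their second row and column indices are complementary.\<close>

lemma qdet_matrix_inverse_3:
  fixes M W :: "'a::ring_1^3^3"
  assumes MW: "M ** W = mat 1" and WM: "W ** M = mat 1"
    and r: "r1 \<noteq> r2" "r1 \<noteq> r3" "r2 \<noteq> r3" and c: "c1 \<noteq> c2" "c1 \<noteq> c3" "c2 \<noteq> c3"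
    and u: "is_unit_r (W$r2$c2)" "is_unit_r (M$c3$r3)"
  shows "is_unit_r (qdet M c1 r1 c3 r3)" "uinv (qdet M c1 r1 c3 r3) = qdet W r1 c1 r2 c2"
proof -
  have mw: "M$i$r1 * W$r1$j + M$i$r2 * W$r2$j + M$i$r3 * W$r3$j = (if i = j then 1 else 0)" for i j
  proof -
    have "(M ** W) $ i $ j = (if i = j then 1 else 0)" using MW by (simp add: mat_1_nth)
    then show ?thesis using r by (simp add: matrix_mult_nth UNIV_3_distinct[OF r] add.assoc)
  qed
  have wm: "W$i$c1 * M$c1$j + W$i$c2 * M$c2$j + W$i$c3 * M$c3$j = (if i = j then 1 else 0)" for i j
  proof -
    have "(W ** M) $ i $ j = (if i = j then 1 else 0)" using WM by (simp add: mat_1_nth)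
    then show ?thesis using c by (simp add: matrix_mult_nth UNIV_3_distinct[OF c] add.assoc)
  qed
  have "qdet M c1 r1 c3 r3 * qdet W r1 c1 r2 c2 = 1"
    unfolding qdet_def
    by (rule qdet_mult_right_eq_1[OF u(2,1)])
      (use mw[of c1 c1] mw[of c3 c1] mw[of c1 c2] mw[of c3 c2] c in simp_all)
  moreover have "qdet W r1 c1 r2 c2 * qdet M c1 r1 c3 r3 = 1"
    unfolding qdet_def
    by (rule qdet_mult_left_eq_1[OF u(2,1)])
      (use wm[of r1 r1] wm[of r2 r1] wm[of r1 r3] wm[of r2 r3] r in simp_all)
  ultimately show "is_unit_r (qdet M c1 r1 c3 r3)" "uinv (qdet M c1 r1 c3 r3) = qdet W r1 c1 r2 c2"
    by (simp_all add: is_unit_rI uinv_eqI)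
qed

section \<open>The maps \<open>J\<close> and \<open>J\<inverse>\<close>\<close>

definition J2mat :: "'a::ring_1^'n^'n \<Rightarrow> 'a^'n^'n" where
  "J2mat M = (\<chi> j k. uinv (M $ k $ j))"

lemma J2mat_nth [simp]: "J2mat M $ j $ k = uinv (M $ k $ j)"
  unfolding J2mat_def by simp

lemma J2_eq: "J2 M = (if unit_entries M then Some (J2mat M) else None)"
  unfolding J2_def J2mat_def unit_entries_def by simp

lemma unit_entries_J2mat: "unit_entries M \<Longrightarrow> unit_entries (J2mat M)"
  unfolding unit_entries_def by simp

lemma J2mat_J2mat: "unit_entries M \<Longrightarrow> J2mat (J2mat M) = M"
  unfolding unit_entries_def by (simp add: vec_eq_iff)

lemma submatrix_invertible_J2mat_Compl_iff:
  fixes M :: "'a::ring_1^3^3"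
  assumes "unit_entries M"
  shows "submatrix_invertible (J2mat M) (- {z}) (- {t}) \<longleftrightarrow> submatrix_invertible M (- {t}) (- {z})"
proof -
  obtain x y where xy: "x \<noteq> y" "- {z} = {x, y}"
    using card_Compl_singleton_3[of z] card_2_iff by metis
  obtain u v where uv: "u \<noteq> v" "- {t} = {u, v}"
    using card_Compl_singleton_3[of t] card_2_iff by metis
  have "submatrix_invertible (J2mat M) {x, y} {u, v} \<longleftrightarrow>
      invertible2 (uinv (M$u$x)) (uinv (M$v$x)) (uinv (M$u$y)) (uinv (M$v$y))"
    using submatrix_invertible_pair_iff[OF xy(1) uv(1), of "J2mat M"] by simp
  also have "\<dots> \<longleftrightarrow> invertible2 (M$u$x) (M$u$y) (M$v$x) (M$v$y)"
    using invertible2_uinv_transpose_iff assms unfolding unit_entries_def by blast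
  also have "\<dots> \<longleftrightarrow> submatrix_invertible M {u, v} {x, y}"
    using submatrix_invertible_pair_iff[OF uv(1) xy(1), of M] by simp
  finally show ?thesis unfolding xy(2) uv(2) .
qed

lemma unit_entries_matrix_inv_J2mat_iff:
  fixes W :: "'a::ring_1^3^3"
  assumes "unit_entries W" "invertible W" "invertible (J2mat W)"
  shows "unit_entries (matrix_inv (J2mat W)) \<longleftrightarrow> unit_entries (matrix_inv W)"
  using submatrix_invertible_Compl_singleton_iff[OF assms(3)]
    submatrix_invertible_Compl_singleton_iff[OF assms(2)]
    submatrix_invertible_J2mat_Compl_iff[OF assms(1)]
  unfolding unit_entries_def by blast

lemma qdet_J2mat:
  assumes "is_unit_r (A$l$i)" "is_unit_r (A$j$i)" "is_unit_r (A$j$k)" "is_unit_r (A$l$k)"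
  shows "qdet (J2mat A) i j k l = - (uinv (A$l$i) * qdet A l k j i * uinv (A$j$k))"
proof -
  have "uinv (A$l$i) * qdet A l k j i * uinv (A$j$k)
      = uinv (A$l$i) * A$l$k * uinv (A$j$k) - (uinv (A$l$i) * A$l$i) * uinv (A$j$i) * (A$j$k * uinv (A$j$k))"
    unfolding qdet_def by (simp add: algebra_simps)
  then show ?thesis using assms by (simp add: qdet_def)
qed

lemma invertible_J2mat_iff_qdet:
  fixes A :: "'a::ring_1^3^3"
  assumes "unit_entries A"
  shows "invertible (J2mat A) \<longleftrightarrow>
    invertible2 (qdet A 1 1 2 2) (qdet A 1 1 3 2) (qdet A 1 1 2 3) (qdet A 1 1 3 3)"
proof -
  have u: "is_unit_r (A$i$j)" for i j using assms unfolding unit_entries_def by blast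
  have "is_unit_r (J2mat A $ 1 $ 1)" using u by simp
  from invertible_3_iff_schur[OF this, unfolded qdet_J2mat[OF u u u u] invertible2_minus]
  show ?thesis
    using invertible2_scale_iff[of "uinv (A$1$2)" "uinv (A$1$3)" "uinv (A$2$1)" "uinv (A$3$1)"] u
    by simp
qed

lemma invertible_J2mat_matrix_inv_iff:
  fixes M :: "'a::ring_1^3^3"
  assumes "invertible M" "unit_entries M" "unit_entries (matrix_inv M)"
  shows "invertible (J2mat (matrix_inv M)) \<longleftrightarrow> invertible (J2mat M)"
proof -
  define W where "W = matrix_inv M"
  have MW: "M ** W = mat 1" "W ** M = mat 1"
    using matrix_inv_right_left[OF assms(1)] by (simp_all add: W_def)
  have uM: "is_unit_r (M$i$j)" and uW: "is_unit_r (W$i$j)" for i j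
    using assms(2,3) unfolding unit_entries_def W_def by blast+
  have "is_unit_r (qdet M 1 1 3 3) \<and> uinv (qdet M 1 1 3 3) = qdet W 1 1 2 2"
    "is_unit_r (qdet M 1 1 3 2) \<and> uinv (qdet M 1 1 3 2) = qdet W 1 1 3 2"
    "is_unit_r (qdet M 1 1 2 3) \<and> uinv (qdet M 1 1 2 3) = qdet W 1 1 2 3"
    "is_unit_r (qdet M 1 1 2 2) \<and> uinv (qdet M 1 1 2 2) = qdet W 1 1 3 3"
    using qdet_matrix_inverse_3[OF MW, of 1 2 3 1 2 3] qdet_matrix_inverse_3[OF MW, of 1 3 2 1 2 3]
      qdet_matrix_inverse_3[OF MW, of 1 2 3 1 3 2] qdet_matrix_inverse_3[OF MW, of 1 3 2 1 3 2] uM uW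
    by simp_all
  then have q: "qdet W 1 1 2 2 = uinv (qdet M 1 1 3 3)" "qdet W 1 1 3 2 = uinv (qdet M 1 1 3 2)"
    "qdet W 1 1 2 3 = uinv (qdet M 1 1 2 3)" "qdet W 1 1 3 3 = uinv (qdet M 1 1 2 2)"
    and uq: "is_unit_r (qdet M 1 1 3 3)" "is_unit_r (qdet M 1 1 3 2)"
    "is_unit_r (qdet M 1 1 2 3)" "is_unit_r (qdet M 1 1 2 2)"
    by simp_all
  have "invertible (J2mat W) \<longleftrightarrow> invertible2 (uinv (qdet M 1 1 3 3)) (uinv (qdet M 1 1 3 2))
      (uinv (qdet M 1 1 2 3)) (uinv (qdet M 1 1 2 2))"
    using invertible_J2mat_iff_qdet[OF assms(3)[folded W_def]] q by simp
  also have "\<dots> \<longleftrightarrow> invertible2 (qdet M 1 1 3 3) (qdet M 1 1 2 3) (qdet M 1 1 3 2) (qdet M 1 1 2 2)"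
    using invertible2_uinv_transpose_iff[OF uq(1,3,2,4)] by simp
  also have "\<dots> \<longleftrightarrow> invertible (J2mat M)"
    using invertible_J2mat_iff_qdet[OF assms(2)] invertible2_swap by blast
  finally show ?thesis unfolding W_def .
qed

definition J_regular :: "'a::ring_1^'n^'n \<Rightarrow> bool" where
  "J_regular M \<longleftrightarrow>
     unit_entries M \<and> invertible M \<and> unit_entries (matrix_inv M) \<and> invertible (J2mat M)"

lemma Jmap_eq:
  "Jmap M = (if invertible M \<and> unit_entries (matrix_inv M) then Some (J2mat (matrix_inv M)) else None)"
  unfolding Jmap_def pcomp_def J1_def J2_eq by simp

lemma Jinvmap_eq:
  "Jinvmap M = (if unit_entries M \<and> invertible (J2mat M) then Some (matrix_inv (J2mat M)) else None)"
  unfolding Jinvmap_def pcomp_def J1_def J2_eq by simp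

lemma pdom_Jmap_Int_pdom_Jinvmap: "pdom Jmap \<inter> pdom Jinvmap = {M. J_regular M}"
  unfolding pdom_def Jmap_eq Jinvmap_eq J_regular_def by auto

lemma J_regular_Jmap:
  fixes M :: "'a::ring_1^3^3"
  assumes "J_regular M"
  shows "Jmap M = Some (J2mat (matrix_inv M)) \<and> J_regular (J2mat (matrix_inv M))"
proof -
  define W where "W = matrix_inv M"
  have M: "unit_entries M" "invertible M" "invertible (J2mat M)" and W: "unit_entries W"
    using assms unfolding J_regular_def W_def by auto
  have "invertible W" "matrix_inv W = M"
    using invertible_matrix_inv[OF M(2)] unfolding W_def by auto
  have "invertible (J2mat W)"
    using invertible_J2mat_matrix_inv_iff[OF M(2,1)] W M(3) unfolding W_def by blast
  moreover have "unit_entries (matrix_inv (J2mat W))"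
    using unit_entries_matrix_inv_J2mat_iff[OF W \<open>invertible W\<close> \<open>invertible (J2mat W)\<close>]
      \<open>matrix_inv W = M\<close> M(1) by simp
  moreover have "invertible (J2mat (J2mat W))" using J2mat_J2mat[OF W] \<open>invertible W\<close> by simp
  ultimately show ?thesis
    using unit_entries_J2mat[OF W] M(2) W unfolding J_regular_def Jmap_eq W_def by simp
qed

lemma J_regular_if_Jmap_Jmap:
  fixes M :: "'a::ring_1^3^3"
  assumes "Jmap M = Some N" "Jmap N \<noteq> None"
  shows "J_regular M"
proof -
  define W where "W = matrix_inv M"
  have M: "invertible M" "unit_entries W" "N = J2mat W"
    using assms(1) unfolding Jmap_eq W_def by (auto split: if_splits)
  have N: "invertible (J2mat W)" "unit_entries (matrix_inv (J2mat W))"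
    using assms(2) unfolding Jmap_eq M(3) by (auto split: if_splits)
  have "invertible W" "matrix_inv W = M"
    using invertible_matrix_inv[OF M(1)] unfolding W_def by auto
  then have "unit_entries M"
    using unit_entries_matrix_inv_J2mat_iff[OF M(2) \<open>invertible W\<close> N(1)] N(2) by simp
  then show ?thesis
    using invertible_J2mat_matrix_inv_iff[OF M(1) _ M(2)[unfolded W_def]] M N(1)
    unfolding J_regular_def W_def by simp
qed

lemma pdom_Jpow_antimono: "m \<le> n \<Longrightarrow> pdom (Jpow n) \<subseteq> pdom (Jpow m)"
proof (induction n)
  case (Suc n)
  have "pdom (Jpow (Suc n)) \<subseteq> pdom (Jpow n)"
    by (auto simp: pdom_def pcomp_def split: option.splits)
  with Suc show ?case by (cases "m = Suc n") auto
qed simp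

lemma Jpow_J_regular:
  fixes M :: "'a::ring_1^3^3"
  assumes "J_regular M"
  shows "\<exists>X. Jpow n M = Some X \<and> J_regular X"
proof (induction n)
  case (Suc n)
  then obtain X where "Jpow n M = Some X" "J_regular X" by blast
  then show ?case using J_regular_Jmap[of X] by (simp add: pcomp_def)
qed (use assms in simp)

lemma pdom_Jpow:
  assumes "2 \<le> n"
  shows "pdom (Jpow n :: 'a::ring_1^3^3 \<Rightarrow> _) = {M. J_regular M}"
proof (intro set_eqI iffI)
  fix M :: "'a^3^3"
  assume "M \<in> pdom (Jpow n)"
  then have "Jpow 2 M \<noteq> None" using pdom_Jpow_antimono[OF assms] by (auto simp: pdom_def)
  then obtain N where "Jmap M = Some N" "Jmap N \<noteq> None"
    by (auto simp: numeral_2_eq_2 pcomp_def split: option.splits)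
  then show "M \<in> {M. J_regular M}" using J_regular_if_Jmap_Jmap by blast
next
  fix M :: "'a^3^3"
  assume "M \<in> {M. J_regular M}"
  then show "M \<in> pdom (Jpow n)" using Jpow_J_regular[of M n] by (auto simp: pdom_def)
qed

lemma J_regular_iff_all_square_submatrices_invertible:
  fixes M :: "'a::ring_1^3^3"
  shows "J_regular M \<longleftrightarrow> (\<exists>N. J2 M = Some N \<and> all_square_submatrices_invertible M
                 \<and> all_square_submatrices_invertible N)"
proof (cases "unit_entries M \<and> invertible M")
  case True
  then have "all_square_submatrices_invertible (J2mat M) \<longleftrightarrow>
      invertible (J2mat M) \<and> unit_entries (matrix_inv M)"
    using all_square_submatrices_invertible_3_iff[of "J2mat M"] unit_entries_J2mat
      unit_entries_matrix_inv_J2mat_iff by blast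
  then show ?thesis
    using True all_square_submatrices_invertible_3_iff[of M] unfolding J_regular_def J2_eq by auto
next
  case False
  then show ?thesis
    using all_square_submatrices_invertible_3_iff[of M] unfolding J_regular_def J2_eq by auto
qed

theorem proposition1:
  shows "(\<forall>n m. 2 \<le> n \<and> 2 \<le> m \<longrightarrow>
            pdom (Jpow n :: 'a::ring_1^3^3 \<Rightarrow> _) = pdom (Jpow m :: 'a^3^3 \<Rightarrow> _)) \<and>
         (\<forall>n\<ge>2. pdom (Jpow n :: 'a^3^3 \<Rightarrow> _) = pdom Jmap \<inter> pdom Jinvmap) \<and>
         (\<forall>n\<ge>2. \<forall>M :: 'a^3^3. M \<in> pdom (Jpow n) \<longleftrightarrow>
            (\<exists>N. J2 M = Some N \<and> all_square_submatrices_invertible M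
                 \<and> all_square_submatrices_invertible N))"
  by (simp add: pdom_Jpow pdom_Jmap_Int_pdom_Jinvmap
      flip: J_regular_iff_all_square_submatrices_invertible)

end
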